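(* For every $\varepsilon>0$ there is a constant $C>0$ such that the following holds. For every finite set $X$ with $|X|=n\ge 2$ and every nontrivial monotone increasing family $\mathcal F\subseteq 2^X$, writing $m(p)=\mu_p(\mathcal F)$ and $p_c=p_c(\mathcal F)$, there exists $p\in[n^{-\varepsilon}p_c,\;p_c]$ such that $$p\,m'(p)\;\le\;C\,m(p)\,\log_2\!\big(1/m(p)\big)$$ (equivalently, $p\,m'(p)\le C\log_2(1/p)\cdot m(p)\log_p m(p)$, i.e. $\mathcal F$ is $(C\log_2(1/p),p)$-optimal).
   Context: For a finite set $X$ with $|X|=n$ and $p\in[0,1]$, $\mu_p$ is the product measure on $2^X$ given by $\mu_p(S)=p^{|S|}(1-p)^{n-|S|}$, and $\mu_p(\mathcal F)=\sum_{S\in\mathcal F}\mu_p(S)$. A family $\mathcal F\subseteq 2^X$ is monotone increasing if $B\supseteq A\in\mathcal F$ implies $B\in\mathcal F$; it is nontrivial if $\mathcal F\neq\emptyset$ and $\mathcal F\neq 2^X$. For such $\mathcal F$, $m(p)=\mu_p(\mathcal F)$ is a strictly increasing polynomial in $p$ with $m(0)=0$, $m(1)=1$, and $p_c(\mathcal F)$ denotes the unique $p\in[0,1]$ with $\mu_p(\mathcal F)=1/2$. Given $C>0$, $\mathcal F$ is called $(C,p)$-optimal if $p\,m'(p)\le C\,m(p)\log_p m(p)$, where $\log_p x=\ln x/\ln p$. *)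

theory Defs
  imports "HOL-Analysis.Analysis"
begin

definition mu_p :: "real \<Rightarrow> 'a set \<Rightarrow> 'a set set \<Rightarrow> real" where
  "mu_p p X F = (\<Sum>S\<in>F. p ^ card S * (1 - p) ^ (card X - card S))"

definition monotone_increasing :: "'a set \<Rightarrow> 'a set set \<Rightarrow> bool" where
  "monotone_increasing X F \<longleftrightarrow> F \<subseteq> Pow X \<and> (\<forall>A B. A \<in> F \<and> A \<subseteq> B \<and> B \<subseteq> X \<longrightarrow> B \<in> F)"

definition nontrivial_family :: "'a set \<Rightarrow> 'a set set \<Rightarrow> bool" where
  "nontrivial_family X F \<longleftrightarrow> F \<noteq> {} \<and> F \<noteq> Pow X"

definition p_crit :: "'a set \<Rightarrow> 'a set set \<Rightarrow> real" where
  "p_crit X F = (THE p. 0 \<le> p \<and> p \<le> 1 \<and> mu_p p X F = 1/2)"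

end

theory Submission
  imports Defs "HOL-Computational_Algebra.Polynomial"
begin

text \<open>
  Suppose \<open>p m'(p) > C m(p) log\<^sub>2 (1/m(p))\<close> on all of \<open>[a, p\<^sub>c]\<close> with \<open>a = n\<^sup>-\<^sup>\<epsilon> p\<^sub>c\<close>.
  Writing \<open>C = c ln 2\<close>, this says that \<open>ln (-ln m(q)) + c ln q\<close> is strictly decreasing there,
  so \<open>-ln m(a) > (p\<^sub>c/a)\<^sup>c ln 2 = n\<^sup>\<epsilon>\<^sup>c ln 2\<close>. On the other hand \<open>m(a) \<ge> a\<^sup>n\<close> (the family
  contains X) and \<open>p\<^sub>c \<ge> 1/(2n)\<close> (every member is nonempty, so \<open>m(p) \<le> n p\<close>), whence
  \<open>-ln m(a) = O(n\<^sup>2)\<close>. Choosing \<open>\<epsilon> c\<close> large enough gives a contradiction.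
\<close>

lemma mu_p_insert:
  fixes p :: real
  assumes fin: "finite X" and x: "x \<notin> X" and FX: "F \<subseteq> Pow (insert x X)"
  shows "mu_p p (insert x X) F =
     (1 - p) * mu_p p X {S\<in>F. x \<notin> S} + p * mu_p p X {T\<in>Pow X. insert x T \<in> F}"
proof -
  let ?t = "\<lambda>N S. p ^ card S * (1 - p) ^ (N - card S)"
  have finF: "finite F" using FX fin by (meson finite_Pow_iff finite_insert rev_finite_subset)
  have cX: "card (insert x X) = Suc (card X)" using fin x by simp
  have split: "F = {S\<in>F. x \<notin> S} \<union> {S\<in>F. x \<in> S}" by auto
  have "mu_p p (insert x X) F =
      (\<Sum>S\<in>{S\<in>F. x \<notin> S}. ?t (Suc (card X)) S) + (\<Sum>S\<in>{S\<in>F. x \<in> S}. ?t (Suc (card X)) S)"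
    unfolding mu_p_def cX by (subst split, rule sum.union_disjoint) (use finF in auto)
  moreover have "(\<Sum>S\<in>{S\<in>F. x \<notin> S}. ?t (Suc (card X)) S) = (1 - p) * mu_p p X {S\<in>F. x \<notin> S}"
    unfolding mu_p_def sum_distrib_left
  proof (rule sum.cong)
    fix S assume "S \<in> {S\<in>F. x \<notin> S}"
    then have "S \<subseteq> X" using FX by auto
    then have "card S \<le> card X" using fin by (simp add: card_mono)
    then show "?t (Suc (card X)) S = (1 - p) * ?t (card X) S" by (simp add: Suc_diff_le)
  qed simp
  moreover have "(\<Sum>S\<in>{S\<in>F. x \<in> S}. ?t (Suc (card X)) S) = p * mu_p p X {T\<in>Pow X. insert x T \<in> F}"
  proof -
    have inj: "inj_on (insert x) {T\<in>Pow X. insert x T \<in> F}"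
      using x by (auto simp: inj_on_def)
    have "{S\<in>F. x \<in> S} = insert x ` {T\<in>Pow X. insert x T \<in> F}"
    proof
      show "{S\<in>F. x \<in> S} \<subseteq> insert x ` {T\<in>Pow X. insert x T \<in> F}"
      proof
        fix S assume "S \<in> {S\<in>F. x \<in> S}"
        then have "S = insert x (S - {x})" "S - {x} \<in> {T\<in>Pow X. insert x T \<in> F}"
          using FX by (auto simp: insert_absorb)
        then show "S \<in> insert x ` {T\<in>Pow X. insert x T \<in> F}" by blast
      qed
    qed auto
    then have "(\<Sum>S\<in>{S\<in>F. x \<in> S}. ?t (Suc (card X)) S) =
        (\<Sum>T\<in>{T\<in>Pow X. insert x T \<in> F}. ?t (Suc (card X)) (insert x T))"
      using sum.reindex[OF inj] by simp
    also have "\<dots> = p * mu_p p X {T\<in>Pow X. insert x T \<in> F}"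
      unfolding mu_p_def sum_distrib_left
    proof (rule sum.cong)
      fix T assume "T \<in> {T\<in>Pow X. insert x T \<in> F}"
      then have "T \<subseteq> X" by auto
      then have "card (insert x T) = Suc (card T)" using fin x by (meson card_insert_disjoint finite_subset subsetD)
      then show "?t (Suc (card X)) (insert x T) = p * ?t (card X) T" by simp
    qed simp
    finally show ?thesis .
  qed
  ultimately show ?thesis by simp
qed

lemma mu_p_Pow: "finite X \<Longrightarrow> mu_p p X (Pow X) = (1::real)"
proof (induction X rule: finite_induct)
  case empty
  then show ?case by (simp add: mu_p_def)
next
  case (insert x X)
  have "{S\<in>Pow (insert x X). x \<notin> S} = Pow X" using insert(2) by auto
  moreover have "{T\<in>Pow X. insert x T \<in> Pow (insert x X)} = Pow X" by auto
  ultimately show ?case using mu_p_insert[OF insert(1,2) subset_refl] insert(3) by simp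
qed

lemma mu_p_subset_mono:
  assumes "finite X" "F \<subseteq> G" "G \<subseteq> Pow X" "0 \<le> p" "p \<le> (1::real)"
  shows "mu_p p X F \<le> mu_p p X G"
  unfolding mu_p_def by (rule sum_mono2) (use assms in \<open>auto intro: finite_subset\<close>)

lemma monotone_increasing_insert_split:
  assumes "monotone_increasing (insert x X) F" "x \<notin> X"
  shows "monotone_increasing X {S\<in>F. x \<notin> S}"
    and "monotone_increasing X {T\<in>Pow X. insert x T \<in> F}"
    and "{S\<in>F. x \<notin> S} \<subseteq> {T\<in>Pow X. insert x T \<in> F}"
proof -
  from assms(1) have FX: "F \<subseteq> Pow (insert x X)"
    and up: "\<And>A B. A \<in> F \<Longrightarrow> A \<subseteq> B \<Longrightarrow> B \<subseteq> insert x X \<Longrightarrow> B \<in> F"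
    unfolding monotone_increasing_def by blast+
  show "monotone_increasing X {S\<in>F. x \<notin> S}"
    unfolding monotone_increasing_def using FX up assms(2) by blast
  show "monotone_increasing X {T\<in>Pow X. insert x T \<in> F}"
    unfolding monotone_increasing_def using up
    by auto (meson insert_mono subset_trans insert_subset subset_insertI)
  show "{S\<in>F. x \<notin> S} \<subseteq> {T\<in>Pow X. insert x T \<in> F}"
    using FX by (auto intro!: up[OF _ subset_insertI])
qed

text \<open>Condition on one element \<open>x\<close>: raising \<open>p\<close> raises both conditional measures and shifts
  weight from the smaller to the larger one.\<close>
lemma mu_p_mono:
  assumes "finite X" "monotone_increasing X F" "0 \<le> p" "p \<le> q" "q \<le> (1::real)"
  shows "mu_p p X F \<le> mu_p q X F"
  using assms
proof (induction X arbitrary: F rule: finite_induct)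
  case empty
  then show ?case by (auto simp: mu_p_def monotone_increasing_def intro!: sum_mono)
next
  case (insert x X F)
  let ?F0 = "{S\<in>F. x \<notin> S}" and ?F1 = "{T\<in>Pow X. insert x T \<in> F}"
  note split = monotone_increasing_insert_split[OF insert.prems(1) insert(2)]
  have FX: "F \<subseteq> Pow (insert x X)" using insert.prems(1) unfolding monotone_increasing_def by blast
  have "mu_p p X ?F0 \<le> mu_p q X ?F0" "mu_p p X ?F1 \<le> mu_p q X ?F1"
    using insert split by blast+
  moreover have "mu_p p X ?F0 \<le> mu_p p X ?F1"
    using mu_p_subset_mono[OF insert(1) split(3) Collect_restrict] insert.prems by simp
  ultimately have "0 \<le> (1-q) * (mu_p q X ?F0 - mu_p p X ?F0) + q * (mu_p q X ?F1 - mu_p p X ?F1)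
      + (q-p) * (mu_p p X ?F1 - mu_p p X ?F0)"
    using insert.prems by (intro add_nonneg_nonneg mult_nonneg_nonneg) auto
  then show ?case unfolding mu_p_insert[OF insert(1,2) FX] by (simp add: algebra_simps)
qed

lemma monotone_nontrivialD:
  assumes "monotone_increasing X F" "nontrivial_family X F"
  shows "X \<in> F" and "{} \<notin> F"
proof -
  have FX: "F \<subseteq> Pow X" and up: "\<And>A B. A \<in> F \<Longrightarrow> A \<subseteq> B \<Longrightarrow> B \<subseteq> X \<Longrightarrow> B \<in> F"
    using assms(1) unfolding monotone_increasing_def by blast+
  obtain S where S: "S \<in> F" using assms(2) unfolding nontrivial_family_def by blast
  show "X \<in> F" by (rule up[OF S]) (use FX S in auto)
  show "{} \<notin> F"
  proof
    assume empty: "{} \<in> F"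
    have "F = Pow X" using FX by (intro equalityI) (auto intro: up[OF empty])
    then show False using assms(2) unfolding nontrivial_family_def by blast
  qed
qed

lemma monotone_increasing_finite:
  "finite X \<Longrightarrow> monotone_increasing X F \<Longrightarrow> finite F"
  unfolding monotone_increasing_def by (meson finite_Pow_iff rev_finite_subset)

lemma mu_p_at_0:
  assumes "finite X" "monotone_increasing X F" "nontrivial_family X F"
  shows "mu_p 0 X F = 0"
proof -
  have "card S \<noteq> 0" if "S \<in> F" for S
  proof -
    have "S \<subseteq> X" using that assms(2) unfolding monotone_increasing_def by blast
    then have "finite S" using assms(1) by (rule finite_subset)
    then show ?thesis using that monotone_nontrivialD(2)[OF assms(2,3)] by auto
  qed
  then show ?thesis unfolding mu_p_def by (intro sum.neutral) auto
qed

lemma mu_p_at_1: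
  assumes "finite X" "monotone_increasing X F" "nontrivial_family X F"
  shows "mu_p 1 X F = 1"
proof -
  have "card S < card X" if "S \<in> F - {X}" for S
  proof -
    have "S \<subset> X" using that assms(2) unfolding monotone_increasing_def by blast
    then show ?thesis using assms(1) by (rule psubset_card_mono[rotated])
  qed
  then have "(\<Sum>S\<in>F - {X}. (1::real) ^ card S * (1 - 1) ^ (card X - card S)) = 0"
    by (intro sum.neutral) auto
  then show ?thesis
    unfolding mu_p_def
    using sum.remove[OF monotone_increasing_finite[OF assms(1,2)] monotone_nontrivialD(1)[OF assms(2,3)],
        of "\<lambda>S. (1::real) ^ card S * (1 - 1) ^ (card X - card S)"]
    by simp
qed

definition mu_poly :: "'a set \<Rightarrow> 'a set set \<Rightarrow> real poly" where
  "mu_poly X F = (\<Sum>S\<in>F. [:0, 1:] ^ card S * [:1, -1:] ^ (card X - card S))"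

lemma poly_mu_poly: "poly (mu_poly X F) = (\<lambda>p. mu_p p X F)"
  by (simp add: fun_eq_iff mu_poly_def mu_p_def poly_sum)

text \<open>A polynomial that is constant on an interval is constant, which would contradict
  \<open>mu_p 0 = 0\<close> and \<open>mu_p 1 = 1\<close>.\<close>
lemma mu_p_strict_mono:
  assumes "finite X" "monotone_increasing X F" "nontrivial_family X F"
    and "0 \<le> p" "p < q" "q \<le> (1::real)"
  shows "mu_p p X F < mu_p q X F"
proof (rule ccontr)
  assume "\<not> mu_p p X F < mu_p q X F"
  then have eq: "mu_p q X F = mu_p p X F"
    using mu_p_mono[OF assms(1,2,4), of q] assms(5,6) by linarith
  let ?P = "mu_poly X F - [:mu_p p X F:]"
  have "{p..q} \<subseteq> {r. poly ?P r = 0}"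
  proof
    fix r assume "r \<in> {p..q}"
    then have "mu_p p X F \<le> mu_p r X F" "mu_p r X F \<le> mu_p q X F"
      using mu_p_mono[OF assms(1,2)] assms(4,6) by auto
    then show "r \<in> {r. poly ?P r = 0}" using eq by (simp add: poly_mu_poly)
  qed
  then have "?P = 0" using poly_roots_finite infinite_Icc[OF assms(5)] finite_subset by blast
  then have "poly (mu_poly X F) 0 = poly (mu_poly X F) 1" by simp
  then show False using mu_p_at_0[OF assms(1-3)] mu_p_at_1[OF assms(1-3)] by (simp add: poly_mu_poly)
qed

lemma mu_p_has_real_derivative:
  "((\<lambda>q. mu_p q X F) has_real_derivative deriv (\<lambda>q. mu_p q X F) p) (at p)"
  using poly_differentiable[of "mu_poly X F" p] DERIV_deriv_iff_real_differentiable
  by (simp add: poly_mu_poly)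

lemma p_crit_spec:
  assumes "finite X" "monotone_increasing X F" "nontrivial_family X F"
  shows "0 < p_crit X F" and "p_crit X F < 1" and "mu_p (p_crit X F) X F = 1/2"
proof -
  have "continuous_on {0..1} (\<lambda>q. mu_p q X F)"
    unfolding poly_mu_poly[symmetric] by (intro continuous_intros)
  then obtain r where r: "0 \<le> r" "r \<le> 1" "mu_p r X F = 1/2"
    using IVT'[of "\<lambda>q. mu_p q X F" 0 "1/2" 1] mu_p_at_0[OF assms] mu_p_at_1[OF assms] by auto
  have uniq: "s = r" if "0 \<le> s" "s \<le> 1" "mu_p s X F = 1/2" for s
    using mu_p_strict_mono[OF assms, of s r] mu_p_strict_mono[OF assms, of r s] that r
    by (cases s r rule: linorder_cases) auto
  have "p_crit X F = r"
    unfolding p_crit_def by (rule the_equality) (use r uniq in blast)+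
  moreover have "r \<noteq> 0" "r \<noteq> 1" using r(3) mu_p_at_0[OF assms] mu_p_at_1[OF assms] by auto
  ultimately show "0 < p_crit X F" "p_crit X F < 1" "mu_p (p_crit X F) X F = 1/2" using r by auto
qed

lemma mu_p_ge_power:
  assumes "finite X" "monotone_increasing X F" "nontrivial_family X F" "0 \<le> p" "p \<le> (1::real)"
  shows "p ^ card X \<le> mu_p p X F"
proof -
  have "p ^ card X * (1 - p) ^ (card X - card X) \<le> (\<Sum>S\<in>F. p ^ card S * (1 - p) ^ (card X - card S))"
    by (rule member_le_sum[OF monotone_nontrivialD(1)[OF assms(2,3)] _
          monotone_increasing_finite[OF assms(1,2)]]) (use assms in auto)
  then show ?thesis unfolding mu_p_def by simp
qed

text \<open>Every member of a nontrivial increasing family is nonempty, so the family is contained in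
  \<open>Pow X - {{}}\<close>, whose measure \<open>1 - (1 - p)\<^sup>n\<close> is at most \<open>n p\<close> by Bernoulli's inequality.\<close>
lemma mu_p_le_card_mult:
  fixes p :: real
  assumes "finite X" "monotone_increasing X F" "nontrivial_family X F" "0 \<le> p" "p \<le> (1::real)"
  shows "mu_p p X F \<le> real (card X) * p"
proof -
  have "mu_p p X F \<le> mu_p p X (Pow X - {{}})"
    using assms monotone_nontrivialD(2)[OF assms(2,3)]
    by (intro mu_p_subset_mono) (auto simp: monotone_increasing_def)
  also have "\<dots> = 1 - (1 - p) ^ card X"
    using mu_p_Pow[OF assms(1), of p] assms(1) unfolding mu_p_def by (subst sum_diff1) auto
  also have "\<dots> \<le> real (card X) * p" using Bernoulli_inequality[of "-p" "card X"] assms by simp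
  finally show ?thesis .
qed

lemma p_crit_ge:
  assumes "finite X" "monotone_increasing X F" "nontrivial_family X F"
  shows "1 / (2 * real (card X)) \<le> p_crit X F"
proof -
  have "1/2 \<le> real (card X) * p_crit X F"
    using mu_p_le_card_mult[OF assms, of "p_crit X F"] p_crit_spec[OF assms] by simp
  then show ?thesis
    using p_crit_spec(1)[OF assms] by (cases "card X = 0") (simp_all add: field_simps)
qed

text \<open>If \<open>q f'(q) > c f(q) (-ln f(q))\<close> on \<open>[a, b]\<close> then \<open>ln (-ln f(q)) + c ln q\<close> decreases there.\<close>
lemma neg_ln_growth_of_log_derivative_bound:
  fixes f f' :: "real \<Rightarrow> real" and a b c :: real
  assumes "0 < a" "a < b"
    and has_deriv: "\<And>q. a \<le> q \<Longrightarrow> q \<le> b \<Longrightarrow> (f has_real_derivative f' q) (at q)"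
    and range: "\<And>q. a \<le> q \<Longrightarrow> q \<le> b \<Longrightarrow> 0 < f q \<and> f q < 1"
    and bound: "\<And>q. a \<le> q \<Longrightarrow> q \<le> b \<Longrightarrow> c * f q * - ln (f q) < q * f' q"
  shows "(b / a) powr c * - ln (f b) < - ln (f a)"
proof -
  define h where "h = (\<lambda>q. ln (- ln (f q)) + c * ln q)"
  have "h b < h a"
  proof (rule DERIV_neg_imp_decreasing[OF \<open>a < b\<close>])
    fix q assume q: "a \<le> q" "q \<le> b"
    define L where "L = - ln (f q)"
    have f: "0 < f q" "f q < 1" using range[OF q] by auto
    then have L: "0 < L" unfolding L_def by simp
    have q0: "0 < q" using q \<open>0 < a\<close> by simp
    have num: "c * f q * L - q * f' q < 0" using bound[OF q] unfolding L_def by simp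
    have "(h has_real_derivative 1 / L * - (f' q / f q) + c / q) (at q)"
      unfolding h_def L_def
      by (rule derivative_eq_intros has_deriv[OF q] refl | use f L q0 in \<open>simp add: L_def\<close>)+
    moreover have "1 / L * - (f' q / f q) + c / q = (c * f q * L - q * f' q) / (q * f q * L)"
      using f L q0 by (simp add: field_simps)
    moreover have "(c * f q * L - q * f' q) / (q * f q * L) < 0"
      using num f L q0 by (intro divide_neg_pos) auto
    ultimately show "\<exists>y. (h has_real_derivative y) (at q) \<and> y < 0" by auto
  qed
  then have "ln (- ln (f b)) + c * ln (b / a) < ln (- ln (f a))"
    unfolding h_def using \<open>0 < a\<close> \<open>a < b\<close> by (simp add: ln_div algebra_simps)
  moreover have "0 < - ln (f a)" using range[of a] \<open>a < b\<close> by simp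
  ultimately have "exp (ln (- ln (f b)) + c * ln (b / a)) < - ln (f a)"
    by (metis exp_less_cancel_iff exp_ln)
  moreover have "exp (ln (- ln (f b)) + c * ln (b / a)) = (b / a) powr c * - ln (f b)"
    using range[of b] \<open>0 < a\<close> \<open>a < b\<close> by (simp add: exp_add powr_def mult.commute)
  ultimately show ?thesis by simp
qed

lemma mult_ln_less_ln2_powr:
  fixes n e :: real
  assumes n: "2 \<le> n" and e: "0 < e"
  shows "n * ((1 + e) * ln n + ln 2) < ln 2 * n powr (10 + 4 * e)"
proof -
  have ln2: "2/3 \<le> ln (2::real)" "ln (2::real) < 1" by (rule ln2_ge_two_thirds, rule ln_2_less_1)
  have "ln 2 \<le> ln n" using n by simp
  then have "(8 + 4 * e) * (2/3) \<le> (8 + 4 * e) * ln n"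
    using ln2 e by (intro mult_left_mono) auto
  also have "\<dots> \<le> exp ((8 + 4 * e) * ln n)"
    using exp_ge_add_one_self[of "(8 + 4 * e) * ln n"] by linarith
  also have "\<dots> = n powr (8 + 4 * e)" using n by (simp add: powr_def)
  finally have powr_ge: "(8 + 4 * e) * (2/3) \<le> n powr (8 + 4 * e)" .
  have "n * ((1 + e) * ln n + ln 2) \<le> n * ((1 + e) * n + n)"
    using n e ln2 ln_le_minus_one[of n] by (intro mult_left_mono add_mono) auto
  also have "\<dots> = n\<^sup>2 * (2 + e)" by (simp add: power2_eq_square algebra_simps)
  also have "\<dots> < n\<^sup>2 * ((8 + 4 * e) * (2/3) * (2/3))"
    using n e by (intro mult_strict_left_mono) auto
  also have "\<dots> = 2/3 * (n\<^sup>2 * ((8 + 4 * e) * (2/3)))" by simp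
  also have "\<dots> \<le> ln 2 * (n\<^sup>2 * n powr (8 + 4 * e))"
  proof (rule mult_mono[OF ln2(1)])
    show "n\<^sup>2 * ((8 + 4 * e) * (2/3)) \<le> n\<^sup>2 * n powr (8 + 4 * e)"
      by (rule mult_left_mono[OF powr_ge]) simp
  qed (use e in auto)
  also have "n\<^sup>2 * n powr (8 + 4 * e) = n powr (10 + 4 * e)"
  proof -
    have "n\<^sup>2 = n powr 2" using n by simp
    then show ?thesis by (simp add: powr_add[symmetric])
  qed
  finally show ?thesis .
qed

lemma exists_p_log_derivative_le:
  fixes X :: "'a set" and e :: real
  assumes fin: "finite X" and card: "2 \<le> card X"
    and mono: "monotone_increasing X F" and nontriv: "nontrivial_family X F" and e: "0 < e"
  shows "\<exists>p. real (card X) powr (-e) * p_crit X F \<le> p \<and> p \<le> p_crit X F \<and>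
           p * deriv (\<lambda>q. mu_p q X F) p
             \<le> (10 + 4 * e) / e * ln 2 * mu_p p X F * log 2 (1 / mu_p p X F)"
proof (rule ccontr)
  assume contra: "\<not> ?thesis"
  define n where "n = real (card X)"
  define pc where "pc = p_crit X F"
  define a where "a = n powr (-e) * pc"
  define c where "c = (10 + 4 * e) / e"
  let ?m = "\<lambda>q. mu_p q X F"
  note pc = p_crit_spec[OF fin mono nontriv, folded pc_def]
  have n: "2 \<le> n" using card unfolding n_def by simp
  have "n powr (-e) < 1" using n e by (intro powr_less_one) auto
  then have a: "0 < a" "a < pc" using n pc unfolding a_def by auto
  have m_range: "0 < ?m q \<and> ?m q < 1" if "a \<le> q" "q \<le> pc" for q
  proof
    have "0 < q ^ card X" using that a by simp
    also have "\<dots> \<le> ?m q" using that a pc by (intro mu_p_ge_power[OF fin mono nontriv]) auto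
    finally show "0 < ?m q" .
    have "?m q \<le> ?m pc" using that a pc by (intro mu_p_mono[OF fin mono]) auto
    then show "?m q < 1" using pc by simp
  qed
  have "c * ?m q * - ln (?m q) < q * deriv ?m q" if "a \<le> q" "q \<le> pc" for q
  proof -
    have "c * ?m q * - ln (?m q) = (10 + 4 * e) / e * ln 2 * ?m q * log 2 (1 / ?m q)"
      using m_range[OF that] unfolding c_def log_def by (simp add: ln_div)
    then show ?thesis using contra that unfolding a_def n_def pc_def by force
  qed
  then have "(pc / a) powr c * - ln (?m pc) < - ln (?m a)"
    using a m_range mu_p_has_real_derivative
    by (intro neg_ln_growth_of_log_derivative_bound) auto
  moreover have "(pc / a) powr c * - ln (?m pc) = ln 2 * n powr (10 + 4 * e)"
    using n e pc(1) unfolding a_def c_def pc(3) by (simp add: powr_minus_divide powr_powr ln_div)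
  moreover have "- ln (?m a) \<le> n * ((1 + e) * ln n + ln 2)"
  proof -
    have "ln (a ^ card X) \<le> ln (?m a)"
      using a pc by (intro ln_mono mu_p_ge_power[OF fin mono nontriv]) auto
    then have "- ln (?m a) \<le> n * (e * ln n - ln pc)"
      using a n pc unfolding n_def a_def by (simp add: ln_realpow ln_mult algebra_simps)
    also have "\<dots> \<le> n * ((1 + e) * ln n + ln 2)"
    proof (rule mult_left_mono)
      have "- ln pc \<le> ln 2 + ln n"
        using ln_mono[OF p_crit_ge[OF fin mono nontriv]] n pc
        unfolding n_def pc_def by (simp add: ln_div ln_mult)
      then show "e * ln n - ln pc \<le> (1 + e) * ln n + ln 2" by (simp add: algebra_simps)
    qed (use n in simp)
    finally show ?thesis .
  qed
  ultimately show False using mult_ln_less_ln2_powr[OF n e] by linarith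
qed

theorem mainTheorem3:
  "\<forall>\<epsilon>::real. \<epsilon> > 0 \<longrightarrow> (\<exists>C::real. C > 0 \<and>
     (\<forall>(X::nat set) (F::nat set set).
        finite X \<and> card X \<ge> 2 \<and> monotone_increasing X F \<and> nontrivial_family X F \<longrightarrow>
        (\<exists>p. real (card X) powr (-\<epsilon>) * p_crit X F \<le> p \<and> p \<le> p_crit X F \<and>
             p * deriv (\<lambda>q. mu_p q X F) p
               \<le> C * mu_p p X F * log 2 (1 / mu_p p X F))))"
proof (intro allI impI)
  fix e :: real
  assume e: "e > 0"
  then have "(10 + 4 * e) / e * ln 2 > 0" by simp
  then show "\<exists>C>0. \<forall>X F. finite X \<and> card X \<ge> 2 \<and> monotone_increasing X F \<and> nontrivial_family X F \<longrightarrow>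
      (\<exists>p. real (card X) powr (-e) * p_crit X F \<le> p \<and> p \<le> p_crit X F \<and>
         p * deriv (\<lambda>q. mu_p q X F) p \<le> C * mu_p p X F * log 2 (1 / mu_p p X F))"
    using exists_p_log_derivative_le[OF _ _ _ _ e] by blast
qed

end
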